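(* Let $I=[a,b]$ be a compact interval, $r\ge 1$ an integer, $\varphi\in C^r(I,\mathbb{R})$, and put $C_r:=\|\varphi^{(r)}\|_{L^\infty(I)}$. Then there exists a decomposition of the set $\{x\in I:\varphi(x)\neq 0\}$ into pairwise disjoint intervals $I_{\lambda,\iota}$, where $\lambda$ ranges over the set of all positive dyadic numbers $\lambda\le\|\varphi\|_\infty$ and, for each such $\lambda$, $\iota$ ranges over an index set $\mathcal{I}_\lambda$, such that: (i) $|\mathcal{I}_\lambda|\le 10r\big(1+|I|\,C_r^{1/r}\lambda^{-1/r}\big)$ for every such $\lambda$; (ii) for every such $\lambda$, every $\iota\in\mathcal{I}_\lambda$ and every $x\in I_{\lambda,\iota}$ one has $\tfrac12\lambda<|\varphi(x)|<4\lambda$.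
   Context: A dyadic number is a number of the form $2^j$, $j\in\mathbb{Z}$. $|I|$ denotes the length of $I$ and $|\mathcal{I}_\lambda|$ the cardinality of the index set. *)

theory Defs
  imports "HOL-Analysis.Analysis"
begin

text \<open>Sup norm of a function on a set (for continuous functions on a compact interval
  this coincides with the L-infinity norm).\<close>
definition sup_norm_on :: "real set \<Rightarrow> (real \<Rightarrow> real) \<Rightarrow> real" where
  "sup_norm_on S g = (SUP x\<in>S. \<bar>g x\<bar>)"

definition dyadic_exps :: "real \<Rightarrow> int set" where
  "dyadic_exps M = {j::int. (2::real) powi j \<le> M}"

end

theory Submission
  imports Defs "HOL-Computational_Algebra.Polynomial"
begin

text \<open>
  The bands are defined by hysteresis.  A point x is in the regime of level \<mu> if, since
  |\<phi>| last reached 2\<mu> (or since a, if |\<phi> a| \<ge> \<mu>), |\<phi>| has stayed above \<mu>/2; the band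
  of level \<lambda> consists of the points in the regime of \<lambda> but not in that of 2\<lambda>.  The dyadic
  bands are disjoint, cover {\<phi> \<noteq> 0}, and |\<phi>| lies in (\<lambda>/2, 4\<lambda>) on the band of \<lambda>.

  Every component of a band contains a core point, where \<lambda> \<le> |\<phi>| \<le> 2\<lambda>, and between two
  components |\<phi>| must leave (\<lambda>/2, 4\<lambda>).  Taking in each component the last core point
  before one of its points gives core points that are pairwise separated by such exits.
  Cut I into N \<le> 5 |I| (C/\<lambda>)^(1/r) + 1 pieces; by Taylor's theorem \<phi> is within \<lambda>/5 of a
  polynomial p of degree < r on each piece, so between two consecutive separated points
  (p^2 - (3\<lambda>/4)^2) (p^2 - (3\<lambda>)^2) has two roots.  Hence each piece carries at most 2r - 1 of
  these points, and a band has at most (2r - 1) N \<le> 10 r (1 + |I| (C/\<lambda>)^(1/r)) components.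
\<close>

section \<open>Counting points separated by level crossings\<close>

lemma card_separated_by_two_le:
  fixes S Z :: "'a::linorder set"
  assumes "finite S" "finite Z"
    and sep: "\<forall>s\<in>S. \<forall>s'\<in>S. s < s' \<longrightarrow> 2 \<le> card (Z \<inter> {s<..<s'})"
  shows "2 * card S \<le> card Z + 2"
proof -
  have "S \<noteq> {} \<longrightarrow> 2 * card S \<le> card (Z \<inter> {..Max S}) + 2"
    using assms(1) sep
  proof (induction S rule: finite_linorder_max_induct)
    case empty
    then show ?case by simp
  next
    case (insert b A)
    show ?case
    proof (cases "A = {}")
      case True
      then show ?thesis by simp
    next
      case False
      define m where "m = Max A"
      have "m \<in> A" "m < b"
        using insert.hyps False by (simp_all add: m_def)
      have IH: "2 * card A \<le> card (Z \<inter> {..m}) + 2"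
        using insert False by (auto simp: m_def)
      have "2 \<le> card (Z \<inter> {m<..<b})"
        using insert.prems \<open>m \<in> A\<close> \<open>m < b\<close> by blast
      moreover have "card (Z \<inter> {..m}) + card (Z \<inter> {m<..<b}) \<le> card (Z \<inter> {..b})"
      proof -
        have "card (Z \<inter> {..m}) + card (Z \<inter> {m<..<b}) = card (Z \<inter> {..m} \<union> Z \<inter> {m<..<b})"
          using assms(2) by (intro card_Un_disjoint[symmetric]) auto
        also have "\<dots> \<le> card (Z \<inter> {..b})"
          using assms(2) \<open>m < b\<close> by (intro card_mono) auto
        finally show ?thesis .
      qed
      moreover have "card (insert b A) = card A + 1" "Max (insert b A) = b"
        using insert.hyps False \<open>m < b\<close> by (auto simp: m_def card_insert_if)
      ultimately show ?thesis using IH by simp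
    qed
  qed
  then show ?thesis
    using assms(2) card_mono[OF assms(2), of "Z \<inter> {..Max S}"] by (cases "S = {}") auto
qed

lemma continuous_on_leaves_band:
  fixes h :: "real \<Rightarrow> real"
  assumes "continuous_on {u..v} h" "u \<le> v"
    and "h u \<in> {c1<..<c2} \<and> h v \<notin> {c1..c2} \<or> h u \<notin> {c1..c2} \<and> h v \<in> {c1<..<c2}"
  shows "\<exists>x\<in>{u<..<v}. h x = c1 \<or> h x = c2"
proof -
  obtain c where c: "c = c1 \<or> c = c2" "min (h u) (h v) < c" "c < max (h u) (h v)"
    using assms(3) by (auto simp: min_def max_def not_le)
  obtain x where x: "u \<le> x" "x \<le> v" "h x = c"
    using IVT'[of h u c v] IVT2'[of h v c u] c(2,3) assms(1,2)
    by (cases "h u \<le> h v") (auto simp: min_def max_def)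
  have "x \<noteq> u" "x \<noteq> v"
    using x(3) c(2,3) by auto
  with x c(1) show ?thesis by auto
qed

lemma continuous_on_hits_band:
  fixes g :: "real \<Rightarrow> real"
  assumes "continuous_on {a..b} g" "a \<le> u" "u \<le> v" "v \<le> b"
    and "lo \<le> hi" "min (g u) (g v) \<le> hi" "lo \<le> max (g u) (g v)"
  shows "\<exists>c\<in>{u..v}. lo \<le> g c \<and> g c \<le> hi"
proof -
  have cont: "continuous_on {u..v} g"
    using assms(2-4) by (auto intro: continuous_on_subset[OF assms(1)])
  show ?thesis
  proof (cases "g u \<le> g v")
    case True
    then obtain c where "u \<le> c" "c \<le> v" "g c = max lo (g u)"
      using IVT'[OF _ _ \<open>u \<le> v\<close> cont, of "max lo (g u)"] assms(5-7) by auto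
    then show ?thesis
      using True assms(5-7) by (intro bexI[of _ c]) auto
  next
    case False
    then obtain c where "u \<le> c" "c \<le> v" "g c = max lo (g v)"
      using IVT2'[OF _ _ \<open>u \<le> v\<close> cont, of "max lo (g v)"] assms(5-7) by auto
    then show ?thesis
      using False assms(5-7) by (intro bexI[of _ c]) auto
  qed
qed

lemma poly_two_levels_root_iff:
  fixes p :: "real poly"
  assumes "0 \<le> c1" "0 \<le> c2"
  shows "poly ((p ^ 2 - [:c1 ^ 2:]) * (p ^ 2 - [:c2 ^ 2:])) x = 0 \<longleftrightarrow>
           \<bar>poly p x\<bar> = c1 \<or> \<bar>poly p x\<bar> = c2"
proof -
  have "poly ((p ^ 2 - [:c1 ^ 2:]) * (p ^ 2 - [:c2 ^ 2:])) x = 0 \<longleftrightarrow>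
          \<bar>poly p x\<bar>\<^sup>2 = c1\<^sup>2 \<or> \<bar>poly p x\<bar>\<^sup>2 = c2\<^sup>2"
    by simp
  also have "\<dots> \<longleftrightarrow> \<bar>poly p x\<bar> = c1 \<or> \<bar>poly p x\<bar> = c2"
    using assms power2_eq_iff_nonneg[of "\<bar>poly p x\<bar>"] by fastforce
  finally show ?thesis .
qed

lemma degree_poly_two_levels_le:
  fixes p :: "'a::comm_ring_1 poly"
  shows "degree ((p ^ 2 - [:c1:]) * (p ^ 2 - [:c2:])) \<le> 4 * degree p"
proof -
  have factor: "degree (p ^ 2 - [:c:]) \<le> 2 * degree p" for c
    using degree_power_le[of p 2] by (intro degree_diff_le) auto
  have "degree ((p ^ 2 - [:c1:]) * (p ^ 2 - [:c2:])) \<le> degree (p ^ 2 - [:c1:]) + degree (p ^ 2 - [:c2:])"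
    by (rule degree_mult_le)
  then show ?thesis
    using factor[of c1] factor[of c2] by linarith
qed

lemma card_band_points_poly_le:
  fixes p :: "real poly"
  assumes "0 \<le> c1" "c1 \<le> c2" "finite D"
    and band: "\<forall>d\<in>D. c1 < \<bar>poly p d\<bar> \<and> \<bar>poly p d\<bar> < c2"
    and sep: "\<forall>d\<in>D. \<forall>d'\<in>D. d < d' \<longrightarrow> (\<exists>z\<in>{d<..<d'}. \<bar>poly p z\<bar> < c1 \<or> c2 < \<bar>poly p z\<bar>)"
  shows "card D \<le> 2 * degree p + 1"
proof (cases "D = {}")
  case True
  then show ?thesis by simp
next
  case False
  define h where "h x = \<bar>poly p x\<bar>" for x
  define Q where "Q = (p ^ 2 - [:c1 ^ 2:]) * (p ^ 2 - [:c2 ^ 2:])"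
  have Q_root_iff: "poly Q x = 0 \<longleftrightarrow> h x = c1 \<or> h x = c2" for x
    unfolding Q_def h_def using assms(1,2) by (intro poly_two_levels_root_iff) auto
  define Z where "Z = {x. poly Q x = 0}"
  have "Q \<noteq> 0"
    using False band Q_root_iff by (fastforce simp: h_def)
  then have "finite Z" "card Z \<le> degree Q"
    unfolding Z_def by (auto intro: poly_roots_finite card_poly_roots_bound)
  moreover have "degree Q \<le> 4 * degree p"
    unfolding Q_def by (rule degree_poly_two_levels_le)
  moreover have "2 \<le> card (Z \<inter> {d<..<d'})" if dd: "d \<in> D" "d' \<in> D" "d < d'" for d d'
  proof -
    obtain z where z: "z \<in> {d<..<d'}" "h z < c1 \<or> c2 < h z"
      using sep dd unfolding h_def by blast
    have cont: "continuous_on S h" for S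
      unfolding h_def by (intro continuous_intros)
    have "h d \<in> {c1<..<c2}" "h d' \<in> {c1<..<c2}" "h z \<notin> {c1..c2}"
      using band dd z(2) by (auto simp: h_def)
    then obtain x1 x2 where "x1 \<in> {d<..<z}" "h x1 = c1 \<or> h x1 = c2"
      and "x2 \<in> {z<..<d'}" "h x2 = c1 \<or> h x2 = c2"
      using continuous_on_leaves_band[OF cont, of d z c1 c2]
        continuous_on_leaves_band[OF cont, of z d' c1 c2] z(1) by auto
    then have "{x1, x2} \<subseteq> Z \<inter> {d<..<d'}" "x1 \<noteq> x2"
      using z by (auto simp: Z_def Q_root_iff)
    then show ?thesis
      using \<open>finite Z\<close> card_mono[of "Z \<inter> {d<..<d'}" "{x1, x2}"] by auto
  qed
  ultimately show ?thesis
    using card_separated_by_two_le[OF assms(3) \<open>finite Z\<close>] by fastforce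
qed

lemma card_band_points_approx_le:
  fixes \<phi> :: "real \<Rightarrow> real" and p :: "real poly"
  assumes "0 < l" and approx: "\<forall>x\<in>{u..v}. \<bar>\<phi> x - poly p x\<bar> \<le> l / 5"
    and "finite D" "D \<subseteq> {u..v}"
    and band: "\<forall>d\<in>D. l \<le> \<bar>\<phi> d\<bar> \<and> \<bar>\<phi> d\<bar> \<le> 2 * l"
    and sep: "\<forall>d\<in>D. \<forall>d'\<in>D. d < d' \<longrightarrow> (\<exists>z\<in>{d<..<d'}. \<bar>\<phi> z\<bar> \<le> l / 2 \<or> 4 * l \<le> \<bar>\<phi> z\<bar>)"
  shows "card D \<le> 2 * degree p + 1"
  \<comment> \<open>an error of at most l/5 moves [l, 2l] into (3l/4, 3l) and the exit values out of [3l/4, 3l]\<close>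
proof (rule card_band_points_poly_le[of "3 * l / 4" "3 * l"])
  show "0 \<le> 3 * l / 4" "3 * l / 4 \<le> 3 * l" "finite D"
    using assms(1,3) by simp_all
  have close: "\<bar>poly p x\<bar> \<le> \<bar>\<phi> x\<bar> + l / 5 \<and> \<bar>\<phi> x\<bar> \<le> \<bar>poly p x\<bar> + l / 5"
    if "x \<in> {u..v}" for x
  proof -
    have "\<bar>\<bar>\<phi> x\<bar> - \<bar>poly p x\<bar>\<bar> \<le> l / 5"
      using order_trans[OF abs_triangle_ineq3 bspec[OF approx that]] .
    then show ?thesis
      unfolding abs_diff_le_iff by linarith
  qed
  show "\<forall>d\<in>D. 3 * l / 4 < \<bar>poly p d\<bar> \<and> \<bar>poly p d\<bar> < 3 * l"
  proof
    fix d assume "d \<in> D"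
    then have "l \<le> \<bar>\<phi> d\<bar>" "\<bar>\<phi> d\<bar> \<le> 2 * l"
      "\<bar>poly p d\<bar> \<le> \<bar>\<phi> d\<bar> + l / 5 \<and> \<bar>\<phi> d\<bar> \<le> \<bar>poly p d\<bar> + l / 5"
      using band close \<open>D \<subseteq> {u..v}\<close> by auto
    then show "3 * l / 4 < \<bar>poly p d\<bar> \<and> \<bar>poly p d\<bar> < 3 * l"
      using \<open>0 < l\<close> by linarith
  qed
  show "\<forall>d\<in>D. \<forall>d'\<in>D. d < d' \<longrightarrow> (\<exists>z\<in>{d<..<d'}. \<bar>poly p z\<bar> < 3 * l / 4 \<or> 3 * l < \<bar>poly p z\<bar>)"
  proof (intro ballI impI)
    fix d d' assume "d \<in> D" "d' \<in> D" "d < d'"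
    then obtain z where z: "z \<in> {d<..<d'}" "\<bar>\<phi> z\<bar> \<le> l / 2 \<or> 4 * l \<le> \<bar>\<phi> z\<bar>"
      using sep by blast
    have "z \<in> {u..v}"
      using z(1) \<open>d \<in> D\<close> \<open>d' \<in> D\<close> \<open>D \<subseteq> {u..v}\<close> by fastforce
    then have "\<bar>poly p z\<bar> < 3 * l / 4 \<or> 3 * l < \<bar>poly p z\<bar>"
      using z(2) close[of z] \<open>0 < l\<close> by (elim disjE) linarith+
    then show "\<exists>z\<in>{d<..<d'}. \<bar>poly p z\<bar> < 3 * l / 4 \<or> 3 * l < \<bar>poly p z\<bar>"
      using z(1) by blast
  qed
qed

lemma card_band_points_piecewise_le:
  fixes \<phi> :: "real \<Rightarrow> real" and u v :: "nat \<Rightarrow> real"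
  assumes "0 < l"
    and approx: "\<forall>m<N. \<exists>p. degree p \<le> n \<and> (\<forall>x\<in>{u m..v m}. \<bar>\<phi> x - poly p x\<bar> \<le> l / 5)"
    and "finite D" "D \<subseteq> (\<Union>m<N. {u m..v m})"
    and band: "\<forall>d\<in>D. l \<le> \<bar>\<phi> d\<bar> \<and> \<bar>\<phi> d\<bar> \<le> 2 * l"
    and sep: "\<forall>d\<in>D. \<forall>d'\<in>D. d < d' \<longrightarrow> (\<exists>z\<in>{d<..<d'}. \<bar>\<phi> z\<bar> \<le> l / 2 \<or> 4 * l \<le> \<bar>\<phi> z\<bar>)"
  shows "card D \<le> (2 * n + 1) * N"
proof -
  have "card D \<le> card (\<Union>m<N. D \<inter> {u m..v m})"
    using \<open>D \<subseteq> (\<Union>m<N. {u m..v m})\<close> \<open>finite D\<close> by (intro card_mono) auto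
  also have "\<dots> \<le> (\<Sum>m<N. card (D \<inter> {u m..v m}))"
    by (rule card_UN_le) simp
  also have "\<dots> \<le> (\<Sum>m<N. 2 * n + 1)"
  proof (rule sum_mono)
    fix m assume "m \<in> {..<N}"
    then obtain p where "degree p \<le> n" "\<forall>x\<in>{u m..v m}. \<bar>\<phi> x - poly p x\<bar> \<le> l / 5"
      using approx by auto
    moreover have "card (D \<inter> {u m..v m}) \<le> 2 * degree p + 1"
      by (rule card_band_points_approx_le) (use assms calculation in auto)
    ultimately show "card (D \<inter> {u m..v m}) \<le> 2 * n + 1"
      by linarith
  qed
  finally show ?thesis
    by (simp add: mult.commute)
qed

section \<open>Piecewise Taylor approximation\<close>

lemma atLeastAtMost_subset_UN_uniform_pieces:
  fixes a b :: real
  assumes "0 < N"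
  shows "{a..b} \<subseteq> (\<Union>m<N. {a + real m * ((b - a) / N) .. a + real (Suc m) * ((b - a) / N)})"
proof
  fix x assume x: "x \<in> {a..b}"
  define \<delta> where "\<delta> = (b - a) / N"
  have "x \<le> a + real N * \<delta>"
    using x \<open>0 < N\<close> by (simp add: \<delta>_def)
  define m where "m = (LEAST m. x \<le> a + real (Suc m) * \<delta>)"
  have "x \<le> a + real (Suc (N - 1)) * \<delta>"
    using \<open>x \<le> a + real N * \<delta>\<close> \<open>0 < N\<close> by simp
  then have "m \<le> N - 1" "x \<le> a + real (Suc m) * \<delta>"
    unfolding m_def by (fact Least_le, fact LeastI)
  moreover have "a + real m * \<delta> \<le> x"
  proof (cases m)
    case 0
    then show ?thesis using x by simp
  next
    case (Suc k)
    then have "\<not> x \<le> a + real (Suc k) * \<delta>"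
      using not_less_Least[of k "\<lambda>m. x \<le> a + real (Suc m) * \<delta>"] unfolding m_def by simp
    then show ?thesis using Suc by simp
  qed
  ultimately show "x \<in> (\<Union>m<N. {a + real m * ((b - a) / N) .. a + real (Suc m) * ((b - a) / N)})"
    using \<open>0 < N\<close> unfolding \<delta>_def by (intro UN_I[of m]) auto
qed

lemma uniform_piece_subset:
  fixes a b :: real
  assumes "a \<le> b" "m < N"
  shows "{a + real m * ((b - a) / N) .. a + real (Suc m) * ((b - a) / N)} \<subseteq> {a..b}"
proof -
  have "real (Suc m) * ((b - a) / N) \<le> real N * ((b - a) / N)"
    using assms by (intro mult_right_mono) auto
  then show ?thesis
    using assms by auto
qed

lemma Taylor_poly_approx:
  fixes f :: "nat \<Rightarrow> real \<Rightarrow> real" and \<phi> :: "real \<Rightarrow> real"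
  assumes "\<forall>x\<in>{a..b}. f 0 x = \<phi> x"
    and "\<forall>k\<le>n. \<forall>x\<in>{a..b}. (f k has_real_derivative f (Suc k) x) (at x within {a..b})"
    and "\<forall>x\<in>{a..b}. \<bar>f (Suc n) x\<bar> \<le> C" and "t \<in> {a..b}"
  shows "\<exists>p. degree p \<le> n \<and> (\<forall>x\<in>{a..b}. \<bar>\<phi> x - poly p x\<bar> \<le> C * \<bar>x - t\<bar> ^ Suc n / fact n)"
proof (intro exI conjI ballI)
  let ?p = "\<Sum>i\<le>n. smult (f i t / fact i) ([:-t, 1:] ^ i)"
  show "degree ?p \<le> n"
    by (intro degree_sum_le order.trans[OF degree_smult_le]) (auto simp: degree_linear_power)
  fix x assume "x \<in> {a..b}"
  have "\<bar>f 0 x - (\<Sum>i\<le>n. f i t * (x - t) ^ i / fact i)\<bar> \<le> C * \<bar>x - t\<bar> ^ Suc n / fact n"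
    using field_Taylor[of "{a..b}" n f C t x] assms \<open>x \<in> {a..b}\<close> by auto
  then show "\<bar>\<phi> x - poly ?p x\<bar> \<le> C * \<bar>x - t\<bar> ^ Suc n / fact n"
    using assms(1) \<open>x \<in> {a..b}\<close> by (simp add: poly_sum)
qed

lemma mult_power_le_of_root_bound:
  fixes C l s \<epsilon> :: real
  assumes "0 \<le> C" "0 < l" "0 \<le> s" "1 \<le> r"
    and "C powr (1 / r) * l powr (- 1 / r) * s \<le> \<epsilon>"
  shows "C * s ^ r \<le> l * \<epsilon> ^ r"
proof (cases "C = 0")
  case True
  then show ?thesis
    using assms by simp
next
  case False
  define k where "k = C powr (1 / r) * l powr (- 1 / r)"
  have "k ^ r = C powr (r * (1 / r)) * l powr (r * (- 1 / r))"
    using False assms(2) by (simp add: k_def power_mult_distrib powr_power)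
  also have "\<dots> = C / l"
    using assms(1,2,4) by (simp add: powr_minus divide_inverse)
  finally have "k ^ r = C / l" .
  then have "C * s ^ r = l * (k * s) ^ r"
    using assms(2) by (simp add: power_mult_distrib)
  also have "\<dots> \<le> l * \<epsilon> ^ r"
    using assms by (intro mult_left_mono power_mono) (auto simp: k_def)
  finally show ?thesis .
qed

lemma uniform_pieces_Taylor_approx:
  fixes f :: "nat \<Rightarrow> real \<Rightarrow> real" and \<phi> :: "real \<Rightarrow> real"
  assumes "a \<le> b" and f0: "\<forall>x\<in>{a..b}. f 0 x = \<phi> x"
    and der: "\<forall>k\<le>n. \<forall>x\<in>{a..b}. (f k has_real_derivative f (Suc k) x) (at x within {a..b})"
    and bd: "\<forall>x\<in>{a..b}. \<bar>f (Suc n) x\<bar> \<le> C" and "m < N"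
  shows "\<exists>p. degree p \<le> n \<and> (\<forall>x\<in>{a + real m * ((b - a) / N) .. a + real (Suc m) * ((b - a) / N)}.
           \<bar>\<phi> x - poly p x\<bar> \<le> C * ((b - a) / N) ^ Suc n)"
proof -
  define \<delta> where "\<delta> = (b - a) / N"
  define t where "t = a + real m * \<delta>"
  have "0 \<le> \<delta>"
    using \<open>a \<le> b\<close> by (simp add: \<delta>_def)
  have t_end: "a + real (Suc m) * \<delta> = t + \<delta>"
    by (simp add: t_def algebra_simps)
  have piece: "{t..t + \<delta>} \<subseteq> {a..b}"
    using uniform_piece_subset[OF \<open>a \<le> b\<close> \<open>m < N\<close>]
    unfolding \<delta>_def[symmetric] t_def[symmetric] t_end .
  then have "t \<in> {a..b}"
    using \<open>0 \<le> \<delta>\<close> by auto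
  then obtain p where "degree p \<le> n"
    and p: "\<forall>x\<in>{a..b}. \<bar>\<phi> x - poly p x\<bar> \<le> C * \<bar>x - t\<bar> ^ Suc n / fact n"
    using Taylor_poly_approx[OF f0 der bd] by blast
  have "\<bar>f (Suc n) a\<bar> \<le> C"
    using bd \<open>a \<le> b\<close> by simp
  then have "0 \<le> C"
    by (rule order_trans[OF abs_ge_zero])
  have "\<bar>\<phi> x - poly p x\<bar> \<le> C * \<delta> ^ Suc n" if "x \<in> {t..t + \<delta>}" for x
  proof -
    have "x \<in> {a..b}"
      using piece that by blast
    then have "\<bar>\<phi> x - poly p x\<bar> \<le> C * \<bar>x - t\<bar> ^ Suc n / fact n"
      using p by blast
    also have "\<dots> \<le> C * \<bar>x - t\<bar> ^ Suc n"
      using divide_left_mono[of 1 "fact n" "C * \<bar>x - t\<bar> ^ Suc n"] \<open>0 \<le> C\<close> by simp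
    also have "\<dots> \<le> C * \<delta> ^ Suc n"
      using that \<open>0 \<le> C\<close> by (intro mult_left_mono power_mono) auto
    finally show ?thesis .
  qed
  with \<open>degree p \<le> n\<close> show ?thesis
    unfolding \<delta>_def[symmetric] t_def[symmetric] t_end by blast
qed

section \<open>Hysteresis bands\<close>

definition hyst_above :: "real \<Rightarrow> (real \<Rightarrow> real) \<Rightarrow> real \<Rightarrow> real \<Rightarrow> bool" where
  "hyst_above a g \<mu> x \<longleftrightarrow>
     (\<exists>y\<in>{a..x}. 2 * \<mu> \<le> g y \<and> (\<forall>z\<in>{y..x}. \<mu> / 2 < g z)) \<or> (\<mu> \<le> g a \<and> (\<forall>z\<in>{a..x}. \<mu> / 2 < g z))"

definition hyst_band :: "real \<Rightarrow> real \<Rightarrow> (real \<Rightarrow> real) \<Rightarrow> real \<Rightarrow> real set" where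
  "hyst_band a b g l = {x\<in>{a..b}. hyst_above a g l x \<and> \<not> hyst_above a g (2 * l) x}"

lemma hyst_above_antimono:
  assumes "\<mu>' \<le> \<mu>" "hyst_above a g \<mu> x"
  shows "hyst_above a g \<mu>' x"
proof -
  have "2 * \<mu>' \<le> 2 * \<mu>" "\<mu>' / 2 \<le> \<mu> / 2" "\<mu>' \<le> \<mu>"
    using assms(1) by simp_all
  with assms(2) show ?thesis
    unfolding hyst_above_def by (meson order_trans order_le_less_trans)
qed

lemma hyst_above_imp_gt: "hyst_above a g \<mu> x \<Longrightarrow> a \<le> x \<Longrightarrow> \<mu> / 2 < g x"
  unfolding hyst_above_def by auto

lemma not_hyst_above_imp_lt:
  assumes "0 < \<mu>" "a \<le> x" "\<not> hyst_above a g \<mu> x"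
  shows "g x < 2 * \<mu>"
proof (rule ccontr)
  assume "\<not> g x < 2 * \<mu>"
  then have "hyst_above a g \<mu> x"
    unfolding hyst_above_def using assms(1,2) by (intro disjI1 bexI[of _ x]) auto
  with assms(3) show False ..
qed

lemma hyst_above_persists:
  assumes "hyst_above a g \<mu> x" "x \<le> z" "\<forall>w\<in>{x..z}. \<mu> / 2 < g w"
  shows "hyst_above a g \<mu> z"
proof -
  have extend: "\<forall>w\<in>{y..z}. \<mu> / 2 < g w" if "\<forall>w\<in>{y..x}. \<mu> / 2 < g w" for y
  proof
    fix w assume "w \<in> {y..z}"
    then show "\<mu> / 2 < g w"
      using that assms(3) by (cases "w \<le> x") auto
  qed
  from assms(1) consider
      (peak) y where "y \<in> {a..x}" "2 * \<mu> \<le> g y" "\<forall>w\<in>{y..x}. \<mu> / 2 < g w"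
    | (start) "\<mu> \<le> g a" "\<forall>w\<in>{a..x}. \<mu> / 2 < g w"
    unfolding hyst_above_def by blast
  then show ?thesis
  proof cases
    case peak
    then show ?thesis
      using extend[of y] assms(2) unfolding hyst_above_def by (intro disjI1 bexI[of _ y]) auto
  next
    case start
    then show ?thesis
      using extend[of a] unfolding hyst_above_def by blast
  qed
qed

lemma hyst_above_before:
  assumes "hyst_above a g \<mu> z" "a \<le> x" "x \<le> z" "\<forall>w\<in>{x..z}. g w < 2 * \<mu>"
  shows "hyst_above a g \<mu> x"
proof -
  from assms(1) consider
      (peak) y where "y \<in> {a..z}" "2 * \<mu> \<le> g y" "\<forall>w\<in>{y..z}. \<mu> / 2 < g w"
    | (start) "\<mu> \<le> g a" "\<forall>w\<in>{a..z}. \<mu> / 2 < g w"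
    unfolding hyst_above_def by blast
  then show ?thesis
  proof cases
    case peak
    have "y < x"
    proof (rule ccontr)
      assume "\<not> y < x"
      then have "y \<in> {x..z}"
        using peak(1) by simp
      then show False
        using peak(2) assms(4) by fastforce
    qed
    then show ?thesis
      using peak assms(3) unfolding hyst_above_def by (intro disjI1 bexI[of _ y]) auto
  next
    case start
    then show ?thesis
      using assms(3) unfolding hyst_above_def by auto
  qed
qed

lemma hyst_band_bounds:
  assumes "0 < l" "x \<in> hyst_band a b g l"
  shows "l / 2 < g x \<and> g x < 4 * l"
  using assms hyst_above_imp_gt[of a g l x] not_hyst_above_imp_lt[of "2 * l" a x g]
  by (auto simp: hyst_band_def)

lemma hyst_band_disjoint:
  assumes "2 * l \<le> l'"
  shows "hyst_band a b g l \<inter> hyst_band a b g l' = {}"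
  using hyst_above_antimono[OF assms] by (auto simp: hyst_band_def)

lemma hyst_band_core_point:
  assumes cont: "continuous_on {a..b} g" and "0 < l" and x: "x \<in> hyst_band a b g l"
  shows "\<exists>c\<in>{a..x}. l \<le> g c \<and> g c \<le> 2 * l"
proof -
  have "a \<le> x" "x \<le> b" "hyst_above a g l x" "\<not> hyst_above a g (2 * l) x"
    using x by (auto simp: hyst_band_def)
  have hits: "\<exists>c\<in>{a..x}. l \<le> g c \<and> g c \<le> 2 * l"
    if u: "a \<le> u" "u \<le> x" "min (g u) (g x) \<le> 2 * l" "l \<le> max (g u) (g x)" for u
  proof -
    obtain c where "c \<in> {u..x}" "l \<le> g c \<and> g c \<le> 2 * l"
      using continuous_on_hits_band[OF cont u(1,2) \<open>x \<le> b\<close>, of l "2 * l"] u(3,4) \<open>0 < l\<close>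
      by auto
    then show ?thesis
      using u(1) by auto
  qed
  show ?thesis
  proof (cases "g x \<le> 2 * l")
    case True
    obtain y where "y \<in> {a..x}" "l \<le> g y"
      using \<open>hyst_above a g l x\<close> \<open>0 < l\<close> \<open>a \<le> x\<close> unfolding hyst_above_def by force
    then show ?thesis
      using hits[of y] True by force
  next
    case False
    show ?thesis
    proof (cases "\<exists>w\<in>{a..x}. g w \<le> l")
      case True
      then obtain w where "w \<in> {a..x}" "g w \<le> l" ..
      then show ?thesis
        using hits[of w] False \<open>0 < l\<close> by auto
    next
      case no_low: False
      then have "g a < 2 * l"
        using \<open>\<not> hyst_above a g (2 * l) x\<close> unfolding hyst_above_def by force
      then show ?thesis
        using hits[of a] no_low \<open>a \<le> x\<close> by force
    qed
  qed
qed

lemma hyst_band_core_point_after_exit: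
  assumes cont: "continuous_on {a..b} g" and "0 < l" and x: "x \<in> hyst_band a b g l"
    and z: "a \<le> z" "z \<le> x" and exit: "g z \<le> l / 2 \<or> 4 * l \<le> g z"
  shows "\<exists>c\<in>{z..x}. l \<le> g c \<and> g c \<le> 2 * l"
proof -
  have "x \<le> b" "hyst_above a g l x" "\<not> hyst_above a g (2 * l) x"
    using x by (auto simp: hyst_band_def)
  have hits: "\<exists>c\<in>{z..v}. l \<le> g c \<and> g c \<le> 2 * l"
    if v: "z \<le> v" "v \<le> x" "min (g z) (g v) \<le> 2 * l" "l \<le> max (g z) (g v)" for v
  proof (rule continuous_on_hits_band[OF cont \<open>a \<le> z\<close> v(1)])
    show "v \<le> b" "l \<le> 2 * l"
      using v(2) \<open>x \<le> b\<close> \<open>0 < l\<close> by auto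
  qed (use v(3,4) in auto)
  from exit show ?thesis
  proof
    assume low: "g z \<le> l / 2"
    \<comment> \<open>the regime of level l must have been entered from 2l after the dip at z\<close>
    obtain y where y: "y \<in> {a..x}" "2 * l \<le> g y" "\<forall>w\<in>{y..x}. l / 2 < g w"
      using \<open>hyst_above a g l x\<close> low z unfolding hyst_above_def by force
    then have "z < y"
      using low z(2) y(3) by (meson atLeastAtMost_iff not_le order.strict_iff_not)
    then show ?thesis
      using hits[of y] y low \<open>0 < l\<close> by force
  next
    assume high: "4 * l \<le> g z"
    obtain w where "w \<in> {z..x}" "g w \<le> l"
      using \<open>\<not> hyst_above a g (2 * l) x\<close> high z unfolding hyst_above_def by force
    then show ?thesis
      using hits[of w] high \<open>0 < l\<close> by force
  qed
qed

lemma hyst_band_convex: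
  assumes x1: "x1 \<in> hyst_band a b g l" and x2: "x2 \<in> hyst_band a b g l" and "x1 \<le> x2"
    and within: "\<forall>z\<in>{x1..x2}. l / 2 < g z \<and> g z < 4 * l"
  shows "{x1..x2} \<subseteq> hyst_band a b g l"
proof
  fix z assume z: "z \<in> {x1..x2}"
  have "a \<le> x1" "x2 \<le> b" "hyst_above a g l x1" "\<not> hyst_above a g (2 * l) x1"
    using x1 x2 by (auto simp: hyst_band_def)
  have "hyst_above a g l z"
    using hyst_above_persists[OF \<open>hyst_above a g l x1\<close>, of z] z within by auto
  moreover have "\<not> hyst_above a g (2 * l) z"
  proof
    assume "hyst_above a g (2 * l) z"
    then have "hyst_above a g (2 * l) x1"
      using hyst_above_before[of a g "2 * l" z x1] z within \<open>a \<le> x1\<close> by auto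
    with \<open>\<not> hyst_above a g (2 * l) x1\<close> show False ..
  qed
  ultimately show "z \<in> hyst_band a b g l"
    using z \<open>a \<le> x1\<close> \<open>x2 \<le> b\<close> by (auto simp: hyst_band_def)
qed

lemma hyst_band_components_exit:
  assumes P: "P \<in> components (hyst_band a b g l)" and P': "P' \<in> components (hyst_band a b g l)"
    and "P \<noteq> P'" "x \<in> P" "x' \<in> P'" "x \<le> x'"
  shows "\<exists>z\<in>{x..x'}. g z \<le> l / 2 \<or> 4 * l \<le> g z"
proof (rule ccontr)
  assume "\<not> ?thesis"
  then have "\<forall>z\<in>{x..x'}. l / 2 < g z \<and> g z < 4 * l"
    by (auto simp: not_le)
  then have "{x..x'} \<subseteq> hyst_band a b g l"
    using hyst_band_convex assms(4-6) in_components_subset[OF P] in_components_subset[OF P'] by blast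
  moreover have "P \<inter> {x..x'} \<noteq> {}"
    using \<open>x \<in> P\<close> \<open>x \<le> x'\<close> by auto
  ultimately have "{x..x'} \<subseteq> P"
    by (rule components_maximal[OF P connected_Icc])
  then have "P \<inter> P' \<noteq> {}"
    using \<open>x' \<in> P'\<close> \<open>x \<le> x'\<close> by auto
  then show False
    using components_eq[OF P P'] \<open>P \<noteq> P'\<close> by blast
qed

lemma hyst_band_last_core_point:
  assumes cont: "continuous_on {a..b} g" and "0 < l" and x: "x \<in> hyst_band a b g l"
  shows "\<exists>c\<in>{a..x}. l \<le> g c \<and> g c \<le> 2 * l
           \<and> (\<forall>c'\<in>{a..x}. l \<le> g c' \<and> g c' \<le> 2 * l \<longrightarrow> c' \<le> c)"
proof -
  let ?S = "{a..x} \<inter> g -` {l..2 * l}"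
  have "x \<le> b"
    using x by (simp add: hyst_band_def)
  then have "continuous_on {a..x} g"
    by (auto intro: continuous_on_subset[OF cont])
  then have "closed ?S"
    by (intro continuous_closed_preimage) auto
  then have "compact ?S"
    by (metis compact_Icc compact_Int_closed inf.absorb_iff2 inf_le1)
  moreover have "?S \<noteq> {}"
    using hyst_band_core_point[OF cont \<open>0 < l\<close> x] by auto
  ultimately obtain c where "c \<in> ?S" "\<forall>c'\<in>?S. c' \<le> c"
    using compact_attains_sup by blast
  then show ?thesis
    by auto
qed

lemma hyst_band_core_points_separated:
  assumes cont: "continuous_on {a..b} g" and "0 < l"
    and P: "P \<in> components (hyst_band a b g l)" and P': "P' \<in> components (hyst_band a b g l)"
    and "P \<noteq> P'" "x \<in> P" "x' \<in> P'" "x \<le> x'"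
    and c: "c \<le> x" "l \<le> g c" "g c \<le> 2 * l"
    and c'_last: "\<forall>c''\<in>{a..x'}. l \<le> g c'' \<and> g c'' \<le> 2 * l \<longrightarrow> c'' \<le> c'"
  shows "\<exists>z\<in>{c<..<c'}. g z \<le> l / 2 \<or> 4 * l \<le> g z"
proof -
  obtain z where z: "z \<in> {x..x'}" and exit: "g z \<le> l / 2 \<or> 4 * l \<le> g z"
    using hyst_band_components_exit[OF P P' assms(5-8)] by blast
  have "x \<in> hyst_band a b g l" "x' \<in> hyst_band a b g l"
    using \<open>x \<in> P\<close> \<open>x' \<in> P'\<close> in_components_subset[OF P] in_components_subset[OF P'] by auto
  then have "a \<le> x"
    by (simp add: hyst_band_def)
  then obtain d where d: "d \<in> {z..x'}" "l \<le> g d" "g d \<le> 2 * l"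
    using hyst_band_core_point_after_exit[OF cont \<open>0 < l\<close> \<open>x' \<in> hyst_band a b g l\<close>, of z] z exit
    by auto
  have "d \<le> c'"
    using c'_last d \<open>a \<le> x\<close> z by auto
  moreover have "c \<noteq> z" "d \<noteq> z"
    using exit c d(2,3) \<open>0 < l\<close> by auto
  ultimately have "z \<in> {c<..<c'}"
    using c(1) z d(1) by auto
  with exit show ?thesis
    by blast
qed

lemma int_exists_step_boundary:
  fixes i k :: int
  assumes "P i" "\<not> P k" "i \<le> k"
  shows "\<exists>j. P j \<and> \<not> P (j + 1)"
proof (rule ccontr)
  assume "\<not> ?thesis"
  then have step: "P (j + 1)" if "P j" for j
    using that by blast
  have "P j" if "i \<le> j" for j
    using that assms(1) by (induction j rule: int_ge_induct) (auto intro: step)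
  then show False
    using assms(2,3) by blast
qed

lemma hyst_band_dyadic_cover:
  fixes g :: "real \<Rightarrow> real"
  assumes x: "x \<in> {a..b}" and "0 < g x"
  shows "\<exists>j::int. x \<in> hyst_band a b g (2 powi j)"
proof -
  let ?P = "\<lambda>j::int. hyst_above a g (2 powi j) x"
  obtain n1 :: nat where "2 * g x < 2 ^ n1"
    using real_arch_pow[of 2 "2 * g x"] by auto
  then have "\<not> ?P (int n1)"
    using hyst_above_imp_gt[of a g "2 ^ n1" x] x by auto
  obtain n2 :: nat where n2: "(1 / 2) ^ n2 < g x / 2"
    using real_arch_pow_inv[of "g x / 2" "1 / 2"] \<open>0 < g x\<close> by auto
  have "(2::real) powi (- int n2) = (1 / 2) ^ n2"
    by (simp add: power_int_minus power_one_over inverse_eq_divide)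
  moreover have "2 * (1 / 2) ^ n2 \<le> g x" "(1 / 2) ^ n2 / 2 < g x"
    using n2 zero_less_power[of "1 / 2 :: real" n2] by linarith+
  ultimately have "?P (- int n2)"
    unfolding hyst_above_def using x by (intro disjI1 bexI[of _ x]) auto
  then obtain j where "?P j" "\<not> ?P (j + 1)"
    using int_exists_step_boundary[of ?P "- int n2" "int n1"] \<open>\<not> ?P (int n1)\<close> by auto
  moreover have "(2::real) powi (j + 1) = 2 * 2 powi j"
    by (simp add: power_int_add_1')
  ultimately show ?thesis
    using x by (auto simp: hyst_band_def)
qed

lemma UN_hyst_band_dyadic:
  fixes g :: "real \<Rightarrow> real"
  assumes cont: "continuous_on {a..b} g" and bound: "\<forall>x\<in>{a..b}. g x \<le> M"
  shows "(\<Union>j\<in>dyadic_exps M. hyst_band a b g (2 powi j)) = {x\<in>{a..b}. 0 < g x}"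
proof (intro equalityI subsetI)
  fix x assume "x \<in> (\<Union>j\<in>dyadic_exps M. hyst_band a b g (2 powi j))"
  then obtain j where x: "x \<in> hyst_band a b g (2 powi j)"
    by blast
  have "(0::real) < 2 powi j"
    by simp
  then have "0 < g x"
    using hyst_band_bounds[of "2 powi j" x] x by fastforce
  then show "x \<in> {x\<in>{a..b}. 0 < g x}"
    using x by (simp add: hyst_band_def)
next
  fix x assume x: "x \<in> {x\<in>{a..b}. 0 < g x}"
  then obtain j where xW: "x \<in> hyst_band a b g (2 powi j)"
    using hyst_band_dyadic_cover[of x a b g] by auto
  obtain c where "c \<in> {a..x}" "2 powi j \<le> g c"
    using hyst_band_core_point[OF cont _ xW] by auto
  then have "j \<in> dyadic_exps M"
    using bound x by (force simp: dyadic_exps_def)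
  with xW show "x \<in> (\<Union>j\<in>dyadic_exps M. hyst_band a b g (2 powi j))"
    by blast
qed

lemma disjoint_family_hyst_band_dyadic:
  "disjoint_family_on (\<lambda>j::int. hyst_band a b g (2 powi j)) S"
  unfolding disjoint_family_on_def
proof (intro ballI impI)
  fix i j :: int assume "i \<noteq> j"
  have "(2::real) * 2 powi (min i j) = 2 powi (min i j + 1)"
    by (simp add: power_int_add_1')
  also have "\<dots> \<le> 2 powi (max i j)"
    using \<open>i \<noteq> j\<close> by (intro power_int_increasing) auto
  finally show "hyst_band a b g (2 powi i) \<inter> hyst_band a b g (2 powi j) = {}"
    using hyst_band_disjoint[of "2 powi min i j" "2 powi max i j" a b g]
    by (cases "i \<le> j") (auto simp: min_def max_def)
qed

section \<open>Components of the bands\<close>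

lemma separated_image:
  fixes d :: "'a \<Rightarrow> real"
  assumes sep: "\<forall>P\<in>F. \<forall>P'\<in>F. P \<noteq> P' \<longrightarrow>
                  (\<exists>z\<in>{d P<..<d P'}. E z) \<or> (\<exists>z\<in>{d P'<..<d P}. E z)"
  shows "inj_on d F" and "\<forall>c\<in>d ` F. \<forall>c'\<in>d ` F. c < c' \<longrightarrow> (\<exists>z\<in>{c<..<c'}. E z)"
proof -
  show "inj_on d F"
  proof (rule inj_onI, rule ccontr)
    fix P P' assume "P \<in> F" "P' \<in> F" "d P = d P'" "P \<noteq> P'"
    then show False
      using sep by fastforce
  qed
  show "\<forall>c\<in>d ` F. \<forall>c'\<in>d ` F. c < c' \<longrightarrow> (\<exists>z\<in>{c<..<c'}. E z)"
  proof (intro ballI impI)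
    fix c c' assume "c \<in> d ` F" "c' \<in> d ` F" "c < c'"
    then obtain P P' where "P \<in> F" "P' \<in> F" "c = d P" "c' = d P'" "P \<noteq> P'"
      by blast
    then show "\<exists>z\<in>{c<..<c'}. E z"
      using sep \<open>c < c'\<close> by fastforce
  qed
qed

lemma hyst_band_components_last_core_points:
  fixes g :: "real \<Rightarrow> real"
  assumes cont: "continuous_on {a..b} g" and "0 < l"
  obtains rep d
  where "\<forall>P\<in>components (hyst_band a b g l).
           rep P \<in> P \<and> a \<le> d P \<and> d P \<le> rep P \<and> l \<le> g (d P) \<and> g (d P) \<le> 2 * l"
    and "\<forall>P\<in>components (hyst_band a b g l). \<forall>c\<in>{a..rep P}. l \<le> g c \<and> g c \<le> 2 * l \<longrightarrow> c \<le> d P"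
proof -
  let ?W = "hyst_band a b g l"
  have "\<forall>P\<in>components ?W. \<exists>x. x \<in> P"
    using in_components_nonempty by blast
  from bchoice[OF this] obtain rep where rep: "\<forall>P\<in>components ?W. rep P \<in> P" ..
  have "\<forall>P\<in>components ?W. \<exists>c. c \<in> {a..rep P} \<and> l \<le> g c \<and> g c \<le> 2 * l
          \<and> (\<forall>c'\<in>{a..rep P}. l \<le> g c' \<and> g c' \<le> 2 * l \<longrightarrow> c' \<le> c)"
  proof
    fix P assume "P \<in> components ?W"
    then have "rep P \<in> ?W"
      using rep in_components_subset by blast
    then show "\<exists>c. c \<in> {a..rep P} \<and> l \<le> g c \<and> g c \<le> 2 * l
          \<and> (\<forall>c'\<in>{a..rep P}. l \<le> g c' \<and> g c' \<le> 2 * l \<longrightarrow> c' \<le> c)"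
      using hyst_band_last_core_point[OF cont \<open>0 < l\<close>] by blast
  qed
  from bchoice[OF this] obtain d where d: "\<forall>P\<in>components ?W. d P \<in> {a..rep P} \<and> l \<le> g (d P)
      \<and> g (d P) \<le> 2 * l \<and> (\<forall>c'\<in>{a..rep P}. l \<le> g c' \<and> g c' \<le> 2 * l \<longrightarrow> c' \<le> d P)" ..
  show ?thesis
    by (rule that[of rep d]) (use rep d in auto)
qed

lemma hyst_band_components_core_points:
  fixes g :: "real \<Rightarrow> real"
  assumes cont: "continuous_on {a..b} g" and "0 < l"
  obtains d where "\<forall>P\<in>components (hyst_band a b g l). d P \<in> {a..b} \<and> l \<le> g (d P) \<and> g (d P) \<le> 2 * l"
    and "\<forall>P\<in>components (hyst_band a b g l). \<forall>P'\<in>components (hyst_band a b g l). P \<noteq> P' \<longrightarrow>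
           (\<exists>z\<in>{d P<..<d P'}. g z \<le> l / 2 \<or> 4 * l \<le> g z) \<or> (\<exists>z\<in>{d P'<..<d P}. g z \<le> l / 2 \<or> 4 * l \<le> g z)"
proof -
  let ?W = "hyst_band a b g l"
  obtain rep d
    where rep_d: "\<forall>P\<in>components ?W. rep P \<in> P \<and> a \<le> d P \<and> d P \<le> rep P \<and> l \<le> g (d P) \<and> g (d P) \<le> 2 * l"
    and d_last: "\<forall>P\<in>components ?W. \<forall>c\<in>{a..rep P}. l \<le> g c \<and> g c \<le> 2 * l \<longrightarrow> c \<le> d P"
    by (rule hyst_band_components_last_core_points[OF cont \<open>0 < l\<close>])
  have d_sep: "\<exists>z\<in>{d P<..<d P'}. g z \<le> l / 2 \<or> 4 * l \<le> g z"
    if P: "P \<in> components ?W" "P' \<in> components ?W" and "rep P < rep P'" for P P'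
  proof -
    have "rep P \<in> P" "d P \<le> rep P" "l \<le> g (d P)" "g (d P) \<le> 2 * l" "rep P' \<in> P'"
      using bspec[OF rep_d P(1)] bspec[OF rep_d P(2)] by simp_all
    moreover have "P \<noteq> P'"
      using \<open>rep P < rep P'\<close> by auto
    ultimately show ?thesis
      using hyst_band_core_points_separated[OF cont \<open>0 < l\<close> P \<open>P \<noteq> P'\<close> \<open>rep P \<in> P\<close> \<open>rep P' \<in> P'\<close>
          less_imp_le[OF \<open>rep P < rep P'\<close>]] bspec[OF d_last P(2)]
      by blast
  qed
  show ?thesis
  proof (rule that[of d])
    show "\<forall>P\<in>components ?W. d P \<in> {a..b} \<and> l \<le> g (d P) \<and> g (d P) \<le> 2 * l"
    proof
      fix P assume P: "P \<in> components ?W"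
      then have "rep P \<in> ?W"
        using bspec[OF rep_d P] in_components_subset by blast
      then show "d P \<in> {a..b} \<and> l \<le> g (d P) \<and> g (d P) \<le> 2 * l"
        using bspec[OF rep_d P] by (simp add: hyst_band_def)
    qed
    show "\<forall>P\<in>components ?W. \<forall>P'\<in>components ?W. P \<noteq> P' \<longrightarrow>
           (\<exists>z\<in>{d P<..<d P'}. g z \<le> l / 2 \<or> 4 * l \<le> g z) \<or> (\<exists>z\<in>{d P'<..<d P}. g z \<le> l / 2 \<or> 4 * l \<le> g z)"
    proof (intro ballI impI)
      fix P P' assume P: "P \<in> components ?W" "P' \<in> components ?W" and "P \<noteq> P'"
      then have "P \<inter> P' = {}"
        using components_nonoverlap[OF P] by simp
      then have "rep P \<noteq> rep P'"
        using bspec[OF rep_d P(1)] bspec[OF rep_d P(2)] by auto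
      then consider "rep P < rep P'" | "rep P' < rep P"
        by linarith
      then show "(\<exists>z\<in>{d P<..<d P'}. g z \<le> l / 2 \<or> 4 * l \<le> g z) \<or> (\<exists>z\<in>{d P'<..<d P}. g z \<le> l / 2 \<or> 4 * l \<le> g z)"
        by cases (use disjI1[OF d_sep[OF P]] disjI2[OF d_sep[OF P(2,1)]] in blast)+
    qed
  qed
qed

lemma hyst_band_components_card_le:
  fixes \<phi> :: "real \<Rightarrow> real" and u v :: "nat \<Rightarrow> real"
  assumes "continuous_on {a..b} \<phi>" "0 < l" "{a..b} \<subseteq> (\<Union>m<N. {u m..v m})"
    and approx: "\<forall>m<N. \<exists>p. degree p \<le> n \<and> (\<forall>x\<in>{u m..v m}. \<bar>\<phi> x - poly p x\<bar> \<le> l / 5)"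
  shows "finite (components (hyst_band a b (\<lambda>x. \<bar>\<phi> x\<bar>) l))"
    and "card (components (hyst_band a b (\<lambda>x. \<bar>\<phi> x\<bar>) l)) \<le> (2 * n + 1) * N"
proof -
  let ?C = "components (hyst_band a b (\<lambda>x. \<bar>\<phi> x\<bar>) l)"
  have cont: "continuous_on {a..b} (\<lambda>x. \<bar>\<phi> x\<bar>)"
    using assms(1) by (intro continuous_intros)
  obtain d where core: "\<forall>P\<in>?C. d P \<in> {a..b} \<and> l \<le> \<bar>\<phi> (d P)\<bar> \<and> \<bar>\<phi> (d P)\<bar> \<le> 2 * l"
    and sep: "\<forall>P\<in>?C. \<forall>P'\<in>?C. P \<noteq> P' \<longrightarrow>
           (\<exists>z\<in>{d P<..<d P'}. \<bar>\<phi> z\<bar> \<le> l / 2 \<or> 4 * l \<le> \<bar>\<phi> z\<bar>)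
         \<or> (\<exists>z\<in>{d P'<..<d P}. \<bar>\<phi> z\<bar> \<le> l / 2 \<or> 4 * l \<le> \<bar>\<phi> z\<bar>)"
    by (rule hyst_band_components_core_points[OF cont \<open>0 < l\<close>])
  have bound: "card F \<le> (2 * n + 1) * N" if F: "F \<subseteq> ?C" "finite F" for F
  proof -
    have sep_F: "\<forall>P\<in>F. \<forall>P'\<in>F. P \<noteq> P' \<longrightarrow>
           (\<exists>z\<in>{d P<..<d P'}. \<bar>\<phi> z\<bar> \<le> l / 2 \<or> 4 * l \<le> \<bar>\<phi> z\<bar>)
         \<or> (\<exists>z\<in>{d P'<..<d P}. \<bar>\<phi> z\<bar> \<le> l / 2 \<or> 4 * l \<le> \<bar>\<phi> z\<bar>)"
      using sep F(1) by blast
    have "card F = card (d ` F)"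
      using separated_image(1)[OF sep_F] by (simp add: card_image)
    also have "\<dots> \<le> (2 * n + 1) * N"
    proof (rule card_band_points_piecewise_le[OF \<open>0 < l\<close> approx])
      show "finite (d ` F)"
        using F(2) by simp
      show "d ` F \<subseteq> (\<Union>m<N. {u m..v m})"
        using core F(1) assms(3) by blast
      show "\<forall>c\<in>d ` F. l \<le> \<bar>\<phi> c\<bar> \<and> \<bar>\<phi> c\<bar> \<le> 2 * l"
        using core F(1) by blast
    qed (rule separated_image(2)[OF sep_F])
    finally show ?thesis .
  qed
  show "finite ?C"
  proof (rule ccontr)
    assume "infinite ?C"
    then obtain F where "F \<subseteq> ?C" "finite F" "card F = (2 * n + 1) * N + 1"
      using infinite_arbitrarily_large by blast
    then show False
      using bound[of F] by simp
  qed
  then show "card ?C \<le> (2 * n + 1) * N"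
    by (rule bound[OF order_refl])
qed

lemma hyst_band_components_bound:
  fixes f :: "nat \<Rightarrow> real \<Rightarrow> real" and \<phi> :: "real \<Rightarrow> real"
  assumes "a \<le> b" "0 < l" and f0: "\<forall>x\<in>{a..b}. f 0 x = \<phi> x"
    and der: "\<forall>k\<le>n. \<forall>x\<in>{a..b}. (f k has_real_derivative f (Suc k) x) (at x within {a..b})"
    and bd: "\<forall>x\<in>{a..b}. \<bar>f (Suc n) x\<bar> \<le> C" and cont: "continuous_on {a..b} \<phi>"
  defines "L \<equiv> (b - a) * C powr (1 / real (Suc n)) * l powr (- 1 / real (Suc n))"
  shows "finite (components (hyst_band a b (\<lambda>x. \<bar>\<phi> x\<bar>) l))"
    and "real (card (components (hyst_band a b (\<lambda>x. \<bar>\<phi> x\<bar>) l))) \<le> 10 * real (Suc n) * (1 + L)"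
proof -
  have "\<bar>f (Suc n) a\<bar> \<le> C"
    using bd \<open>a \<le> b\<close> by simp
  then have "0 \<le> C"
    by (rule order_trans[OF abs_ge_zero])
  then have "0 \<le> L"
    using \<open>a \<le> b\<close> by (simp add: L_def)
  \<comment> \<open>N \<ge> 5 L pieces make the Taylor error C ((b - a) / N) ^ (n + 1) at most l / 5\<close>
  define N where "N = nat \<lfloor>5 * L\<rfloor> + 1"
  have "real N = of_int \<lfloor>5 * L\<rfloor> + 1"
    using \<open>0 \<le> L\<close> by (simp add: N_def)
  then have "0 < N" "5 * L \<le> real N" "real N \<le> 5 * L + 1"
    using floor_correct[of "5 * L"] by (simp_all add: N_def, linarith+)
  have "C powr (1 / real (Suc n)) * l powr (- 1 / real (Suc n)) * ((b - a) / N) = L / N"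
    by (simp add: L_def mult.commute mult.left_commute)
  also have "\<dots> \<le> 1 / 5"
    using \<open>0 < N\<close> \<open>5 * L \<le> real N\<close> by (simp add: divide_le_eq)
  finally have "C * ((b - a) / N) ^ Suc n \<le> l * (1 / 5) ^ Suc n"
    using \<open>0 \<le> C\<close> \<open>0 < l\<close> \<open>a \<le> b\<close> by (intro mult_power_le_of_root_bound) auto
  also have "\<dots> \<le> l / 5"
    using \<open>0 < l\<close> power_le_one[of "1 / 5 :: real" n] by (simp add: mult_left_le)
  finally have err: "C * ((b - a) / N) ^ Suc n \<le> l / 5" .
  have "\<forall>m<N. \<exists>p. degree p \<le> n \<and> (\<forall>x\<in>{a + real m * ((b - a) / N) .. a + real (Suc m) * ((b - a) / N)}.
           \<bar>\<phi> x - poly p x\<bar> \<le> l / 5)"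
    using uniform_pieces_Taylor_approx[OF \<open>a \<le> b\<close> f0 der bd] err by (meson order_trans)
  from hyst_band_components_card_le[OF cont \<open>0 < l\<close> atLeastAtMost_subset_UN_uniform_pieces[OF \<open>0 < N\<close>] this]
  have fin: "finite (components (hyst_band a b (\<lambda>x. \<bar>\<phi> x\<bar>) l))"
    and card: "card (components (hyst_band a b (\<lambda>x. \<bar>\<phi> x\<bar>) l)) \<le> (2 * n + 1) * N" .
  show "finite (components (hyst_band a b (\<lambda>x. \<bar>\<phi> x\<bar>) l))"
    by (fact fin)
  have "real (card (components (hyst_band a b (\<lambda>x. \<bar>\<phi> x\<bar>) l))) \<le> real (2 * n + 1) * real N"
    using card by (metis of_nat_le_iff of_nat_mult)
  also have "\<dots> \<le> (2 * real n + 2) * (5 * L + 1)"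
    using \<open>real N \<le> 5 * L + 1\<close> by (intro mult_mono) auto
  also have "\<dots> \<le> 10 * real (Suc n) * (1 + L)"
    using \<open>0 \<le> L\<close> by (simp add: algebra_simps)
  finally show "real (card (components (hyst_band a b (\<lambda>x. \<bar>\<phi> x\<bar>) l))) \<le> 10 * real (Suc n) * (1 + L)" .
qed

lemma abs_le_sup_norm_on:
  fixes h :: "real \<Rightarrow> real"
  assumes "continuous_on {a..b} h" "x \<in> {a..b}"
  shows "\<bar>h x\<bar> \<le> sup_norm_on {a..b} h"
proof -
  have "compact ((\<lambda>x. \<bar>h x\<bar>) ` {a..b})"
    using assms(1) by (intro compact_continuous_image continuous_intros) auto
  then have "bdd_above ((\<lambda>x. \<bar>h x\<bar>) ` {a..b})"
    by (intro bounded_imp_bdd_above compact_imp_bounded)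
  then show ?thesis
    unfolding sup_norm_on_def using assms(2) by (rule cSUP_upper2) simp
qed

lemma components_enumeration:
  fixes W :: "'j \<Rightarrow> 'a::topological_space set"
  assumes fin: "\<forall>j\<in>E. finite (components (W j))" and disj: "disjoint_family_on W E"
  obtains J :: "'j \<Rightarrow> nat set" and K :: "'j \<Rightarrow> nat \<Rightarrow> 'a set"
  where "\<forall>j\<in>E. finite (J j) \<and> card (J j) = card (components (W j))"
    and "\<forall>j\<in>E. \<forall>i\<in>J j. K j i \<in> components (W j)"
    and "\<forall>j\<in>E. \<forall>i\<in>J j. \<forall>j'\<in>E. \<forall>i'\<in>J j'. (j, i) \<noteq> (j', i') \<longrightarrow> K j i \<inter> K j' i' = {}"
    and "(\<Union>j\<in>E. \<Union>i\<in>J j. K j i) = (\<Union>j\<in>E. W j)"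
proof -
  define J where "J j = {0..<card (components (W j))}" for j
  have "\<forall>j\<in>E. \<exists>h. bij_betw h (J j) (components (W j))"
    using fin ex_bij_betw_nat_finite unfolding J_def by blast
  from bchoice[OF this] obtain K where K: "\<forall>j\<in>E. bij_betw (K j) (J j) (components (W j))" ..
  have K_comp: "K j i \<in> components (W j)" if "j \<in> E" "i \<in> J j" for j i
    using K that bij_betwE by blast
  have K_union: "(\<Union>i\<in>J j. K j i) = W j" if "j \<in> E" for j
    using K that Union_components[of "W j"] by (simp add: bij_betw_def)
  show ?thesis
  proof (rule that[of J K])
    show "\<forall>j\<in>E. \<forall>i\<in>J j. \<forall>j'\<in>E. \<forall>i'\<in>J j'. (j, i) \<noteq> (j', i') \<longrightarrow> K j i \<inter> K j' i' = {}"
    proof (intro ballI impI)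
      fix j i j' i' assume j: "j \<in> E" "i \<in> J j" and j': "j' \<in> E" "i' \<in> J j'"
        and "(j, i) \<noteq> (j', i')"
      show "K j i \<inter> K j' i' = {}"
      proof (cases "j = j'")
        case True
        then have "K j i \<noteq> K j' i'"
          using K j j' \<open>(j, i) \<noteq> (j', i')\<close> by (metis bij_betw_imp_inj_on inj_on_contraD)
        then show ?thesis
          using components_eq K_comp[OF j] K_comp[OF j'] True by blast
      next
        case False
        then have "W j \<inter> W j' = {}"
          using disj j(1) j'(1) by (simp add: disjoint_family_on_def)
        then show ?thesis
          using in_components_subset[OF K_comp[OF j]] in_components_subset[OF K_comp[OF j']] by blast
      qed
    qed
  qed (use K_comp K_union in \<open>auto simp: J_def\<close>)
qed

lemma hyst_band_dyadic_decomposition: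
  fixes \<phi> :: "real \<Rightarrow> real" and B :: "int \<Rightarrow> real"
  assumes cont: "continuous_on {a..b} \<phi>" and M: "\<And>x. x \<in> {a..b} \<Longrightarrow> \<bar>\<phi> x\<bar> \<le> M"
    and comps: "\<forall>j\<in>dyadic_exps M. finite (components (hyst_band a b (\<lambda>x. \<bar>\<phi> x\<bar>) (2 powi j)))
                  \<and> real (card (components (hyst_band a b (\<lambda>x. \<bar>\<phi> x\<bar>) (2 powi j)))) \<le> B j"
  shows "\<exists>(J :: int \<Rightarrow> nat set) (K :: int \<Rightarrow> nat \<Rightarrow> real set).
     (\<forall>j\<in>dyadic_exps M. finite (J j) \<and> real (card (J j)) \<le> B j)
   \<and> (\<forall>j\<in>dyadic_exps M. \<forall>i\<in>J j. is_interval (K j i))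
   \<and> (\<forall>j\<in>dyadic_exps M. \<forall>i\<in>J j. \<forall>j'\<in>dyadic_exps M. \<forall>i'\<in>J j'.
        (j, i) \<noteq> (j', i') \<longrightarrow> K j i \<inter> K j' i' = {})
   \<and> (\<Union>j\<in>dyadic_exps M. \<Union>i\<in>J j. K j i) = {x\<in>{a..b}. \<phi> x \<noteq> 0}
   \<and> (\<forall>j\<in>dyadic_exps M. \<forall>i\<in>J j. \<forall>x\<in>K j i.
        (2::real) powi j / 2 < \<bar>\<phi> x\<bar> \<and> \<bar>\<phi> x\<bar> < 4 * (2::real) powi j)"
proof -
  define W where "W j = hyst_band a b (\<lambda>x. \<bar>\<phi> x\<bar>) (2 powi j)" for j :: int
  have "\<forall>j\<in>dyadic_exps M. finite (components (W j))"
    using comps by (simp add: W_def)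
  moreover have "disjoint_family_on W (dyadic_exps M)"
    unfolding W_def by (rule disjoint_family_hyst_band_dyadic)
  ultimately obtain J :: "int \<Rightarrow> nat set" and K
    where J: "\<forall>j\<in>dyadic_exps M. finite (J j) \<and> card (J j) = card (components (W j))"
    and K: "\<forall>j\<in>dyadic_exps M. \<forall>i\<in>J j. K j i \<in> components (W j)"
    and disj: "\<forall>j\<in>dyadic_exps M. \<forall>i\<in>J j. \<forall>j'\<in>dyadic_exps M. \<forall>i'\<in>J j'.
                 (j, i) \<noteq> (j', i') \<longrightarrow> K j i \<inter> K j' i' = {}"
    and union: "(\<Union>j\<in>dyadic_exps M. \<Union>i\<in>J j. K j i) = (\<Union>j\<in>dyadic_exps M. W j)"
    by (rule components_enumeration)
  have "(\<Union>j\<in>dyadic_exps M. W j) = {x\<in>{a..b}. \<phi> x \<noteq> 0}"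
    using UN_hyst_band_dyadic[of a b "\<lambda>x. \<bar>\<phi> x\<bar>" M] cont M
    by (simp add: W_def continuous_on_rabs)
  show ?thesis
  proof (intro exI[of _ J] exI[of _ K] conjI ballI impI)
    fix j assume "j \<in> dyadic_exps M"
    then show "finite (J j)" "real (card (J j)) \<le> B j"
      using J comps by (simp_all add: W_def)
  next
    fix j i assume "j \<in> dyadic_exps M" "i \<in> J j"
    then show "is_interval (K j i)"
      using K in_components_connected is_interval_connected_1 by blast
  next
    show "(\<Union>j\<in>dyadic_exps M. \<Union>i\<in>J j. K j i) = {x\<in>{a..b}. \<phi> x \<noteq> 0}"
      using union \<open>(\<Union>j\<in>dyadic_exps M. W j) = {x\<in>{a..b}. \<phi> x \<noteq> 0}\<close> by simp
  next
    fix j i x assume "j \<in> dyadic_exps M" "i \<in> J j" "x \<in> K j i"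
    then have "x \<in> W j"
      using K in_components_subset by blast
    then show "(2::real) powi j / 2 < \<bar>\<phi> x\<bar>" "\<bar>\<phi> x\<bar> < 4 * (2::real) powi j"
      using hyst_band_bounds[of "2 powi j" x a b "\<lambda>x. \<bar>\<phi> x\<bar>"] by (simp_all add: W_def)
  qed (use disj in simp)
qed

theorem theorem2p1:
  fixes a b :: real and r :: nat and \<phi> :: "real \<Rightarrow> real"
    and f :: "nat \<Rightarrow> real \<Rightarrow> real"
  assumes "a \<le> b" and "r \<ge> 1"
    and "\<forall>x\<in>{a..b}. f 0 x = \<phi> x"
    and "\<forall>k<r. \<forall>x\<in>{a..b}. (f k has_real_derivative f (Suc k) x) (at x within {a..b})"
    and "continuous_on {a..b} (f r)"
  shows "\<exists>(J :: int \<Rightarrow> nat set) (K :: int \<Rightarrow> nat \<Rightarrow> real set).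
     (\<forall>j\<in>dyadic_exps (sup_norm_on {a..b} \<phi>).
        finite (J j) \<and>
        real (card (J j)) \<le> 10 * real r * (1 + (b - a) * sup_norm_on {a..b} (f r) powr (1 / real r)
                                   * ((2::real) powi j) powr (- 1 / real r)))
   \<and> (\<forall>j\<in>dyadic_exps (sup_norm_on {a..b} \<phi>). \<forall>i\<in>J j. is_interval (K j i))
   \<and> (\<forall>j\<in>dyadic_exps (sup_norm_on {a..b} \<phi>). \<forall>i\<in>J j.
        \<forall>j'\<in>dyadic_exps (sup_norm_on {a..b} \<phi>). \<forall>i'\<in>J j'.
          (j, i) \<noteq> (j', i') \<longrightarrow> K j i \<inter> K j' i' = {})
   \<and> (\<Union>j\<in>dyadic_exps (sup_norm_on {a..b} \<phi>). \<Union>i\<in>J j. K j i) = {x\<in>{a..b}. \<phi> x \<noteq> 0}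
   \<and> (\<forall>j\<in>dyadic_exps (sup_norm_on {a..b} \<phi>). \<forall>i\<in>J j. \<forall>x\<in>K j i.
        (2::real) powi j / 2 < \<bar>\<phi> x\<bar> \<and> \<bar>\<phi> x\<bar> < 4 * (2::real) powi j)"
proof -
  obtain n where r: "r = Suc n"
    using \<open>r \<ge> 1\<close> by (cases r) auto
  have "continuous_on {a..b} (f 0)"
    using assms(4) r by (intro DERIV_continuous_on[where D = "f 1"]) auto
  then have cont: "continuous_on {a..b} \<phi>"
    by (rule continuous_on_eq) (use assms(3) in auto)
  have der: "\<forall>k\<le>n. \<forall>x\<in>{a..b}. (f k has_real_derivative f (Suc k) x) (at x within {a..b})"
    using assms(4) r by auto
  have "\<forall>x\<in>{a..b}. \<bar>f (Suc n) x\<bar> \<le> sup_norm_on {a..b} (f r)"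
    using abs_le_sup_norm_on[OF assms(5)] r by simp
  note bound = hyst_band_components_bound[OF \<open>a \<le> b\<close> _ assms(3) der this cont]
  have "\<forall>j\<in>dyadic_exps (sup_norm_on {a..b} \<phi>).
      finite (components (hyst_band a b (\<lambda>x. \<bar>\<phi> x\<bar>) (2 powi j)))
    \<and> real (card (components (hyst_band a b (\<lambda>x. \<bar>\<phi> x\<bar>) (2 powi j))))
        \<le> 10 * real r * (1 + (b - a) * sup_norm_on {a..b} (f r) powr (1 / real r)
                                   * ((2::real) powi j) powr (- 1 / real r))"
    using bound r by simp
  from hyst_band_dyadic_decomposition[OF cont abs_le_sup_norm_on[OF cont] this] show ?thesis
    by simp
qed

end
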